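(* Let $\sigma$ be a signature including $\{\triangleright, ;\}$ and let $\mathcal{A}$ be a $\sigma$-algebra. (1) If $\mathcal{A}$ has a join-complete representation by partial functions, then composition in $\mathcal{A}$ is completely left-distributive over joins: for every $S \subseteq \mathcal{A}$ with $\bigvee S$ existing and every $a\in\mathcal{A}$, $\bigvee\{a;s : s\in S\}$ exists and equals $a ; \bigvee S$. (2) If $\mathcal{A}$ has a meet-complete representation by partial functions, then composition in $\mathcal{A}$ is completely left-distributive over meets: for every nonempty $S\subseteq\mathcal{A}$ with $\bigwedge S$ existing and every $a\in\mathcal{A}$, $\bigwedge\{a;s:s\in S\}$ exists and equals $a;\bigwedge S$.
   Context: Signatures $\sigma$ are sets of operation symbols drawn from: $\triangleright$ (antidomain restriction), $;$ (composition), $\wedge$ (intersection), $\mathrm{upd}$ (update), $\sqcup$ (preferential union), $\mathsf{D}$ (domain), $\mathsf{A}$ (antidomain), interpreted on partial functions as: $f \triangleright g = \{(x,y) \in g : x \notin \mathrm{dom}(f)\}$; $f;g=\{(x,z):\exists y\,((x,y)\in f,(y,z)\in g)\}$; $f\wedge g = f\cap g$; $\mathrm{upd}(f,g)(x)$ is $f(x)$ if $f(x)$ defined and $g(x)$ undefined, $g(x)$ if both defined, undefined otherwise; $(f\sqcup g)(x)$ is $f(x)$ if defined, else $g(x)$; $\mathsf{D}(f)$ = identity on $\mathrm{dom}(f)$; $\mathsf{A}(f)$ = identity on the complement of $\mathrm{dom}(f)$ in the base. A representation by partial functions is an isomorphism onto a $\sigma$-algebra of partial functions with these operations. Define $0 :=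 a\triangleright a$, $a\lhd b := (a\triangleright b)\triangleright b$, $a \le b :\iff a\lhd b = a$; for representable algebras this is a partial order and $a\le b\iff\theta(a)\subseteq\theta(b)$. $\theta$ is join complete if $\theta(\bigvee S)=\bigcup\theta[S]$ whenever $\bigvee S$ exists; meet complete if $\theta(\bigwedge S)=\bigcap\theta[S]$ whenever $S$ is nonempty and $\bigwedge S$ exists. *)

theory Defs
  imports Main
begin

datatype opsym = Restr | Comp | Meet | Upd | Pref | Dom | Antidom

text \<open>An algebra in the full language; only the operations named in the
signature sigma matter (the others are ignored).\<close>
record 'a alg =
  carrier :: "'a set"
  restr   :: "'a \<Rightarrow> 'a \<Rightarrow> 'a"
  comp    :: "'a \<Rightarrow> 'a \<Rightarrow> 'a"
  meet    :: "'a \<Rightarrow> 'a \<Rightarrow> 'a"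
  upd     :: "'a \<Rightarrow> 'a \<Rightarrow> 'a"
  pref    :: "'a \<Rightarrow> 'a \<Rightarrow> 'a"
  dom     :: "'a \<Rightarrow> 'a"
  antidom :: "'a \<Rightarrow> 'a"

definition sigma_algebra :: "opsym set \<Rightarrow> 'a alg \<Rightarrow> bool" where
  "sigma_algebra \<sigma> \<A> \<longleftrightarrow>
     (Restr \<in> \<sigma> \<longrightarrow> (\<forall>a\<in>carrier \<A>. \<forall>b\<in>carrier \<A>. restr \<A> a b \<in> carrier \<A>)) \<and>
     (Comp \<in> \<sigma> \<longrightarrow> (\<forall>a\<in>carrier \<A>. \<forall>b\<in>carrier \<A>. comp \<A> a b \<in> carrier \<A>)) \<and>
     (Meet \<in> \<sigma> \<longrightarrow> (\<forall>a\<in>carrier \<A>. \<forall>b\<in>carrier \<A>. meet \<A> a b \<in> carrier \<A>)) \<and>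
     (Upd \<in> \<sigma> \<longrightarrow> (\<forall>a\<in>carrier \<A>. \<forall>b\<in>carrier \<A>. upd \<A> a b \<in> carrier \<A>)) \<and>
     (Pref \<in> \<sigma> \<longrightarrow> (\<forall>a\<in>carrier \<A>. \<forall>b\<in>carrier \<A>. pref \<A> a b \<in> carrier \<A>)) \<and>
     (Dom \<in> \<sigma> \<longrightarrow> (\<forall>a\<in>carrier \<A>. dom \<A> a \<in> carrier \<A>)) \<and>
     (Antidom \<in> \<sigma> \<longrightarrow> (\<forall>a\<in>carrier \<A>. antidom \<A> a \<in> carrier \<A>))"

definition pfun_on :: "'x set \<Rightarrow> ('x \<times> 'x) set \<Rightarrow> bool" where
  "pfun_on X f \<longleftrightarrow> f \<subseteq> X \<times> X \<and> single_valued f"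

definition pf_restr :: "('x \<times> 'x) set \<Rightarrow> ('x \<times> 'x) set \<Rightarrow> ('x \<times> 'x) set" where
  "pf_restr f g = {(x, y) \<in> g. x \<notin> Domain f}"

definition pf_comp :: "('x \<times> 'x) set \<Rightarrow> ('x \<times> 'x) set \<Rightarrow> ('x \<times> 'x) set" where
  "pf_comp f g = f O g"

definition pf_meet :: "('x \<times> 'x) set \<Rightarrow> ('x \<times> 'x) set \<Rightarrow> ('x \<times> 'x) set" where
  "pf_meet f g = f \<inter> g"

definition pf_upd :: "('x \<times> 'x) set \<Rightarrow> ('x \<times> 'x) set \<Rightarrow> ('x \<times> 'x) set" where
  "pf_upd f g = {(x, y) \<in> f. x \<notin> Domain g} \<union> {(x, y) \<in> g. x \<in> Domain f}"

definition pf_pref :: "('x \<times> 'x) set \<Rightarrow> ('x \<times> 'x) set \<Rightarrow> ('x \<times> 'x) set" where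
  "pf_pref f g = f \<union> {(x, y) \<in> g. x \<notin> Domain f}"

definition pf_dom :: "('x \<times> 'x) set \<Rightarrow> ('x \<times> 'x) set" where
  "pf_dom f = Id_on (Domain f)"

definition pf_antidom :: "'x set \<Rightarrow> ('x \<times> 'x) set \<Rightarrow> ('x \<times> 'x) set" where
  "pf_antidom X f = Id_on (X - Domain f)"

definition representation ::
  "opsym set \<Rightarrow> 'a alg \<Rightarrow> 'x set \<Rightarrow> ('a \<Rightarrow> ('x \<times> 'x) set) \<Rightarrow> bool" where
  "representation \<sigma> \<A> X \<theta> \<longleftrightarrow>
     inj_on \<theta> (carrier \<A>) \<and>
     (\<forall>a\<in>carrier \<A>. pfun_on X (\<theta> a)) \<and>
     (Restr \<in> \<sigma> \<longrightarrow> (\<forall>a\<in>carrier \<A>. \<forall>b\<in>carrier \<A>. \<theta> (restr \<A> a b) = pf_restr (\<theta> a) (\<theta> b))) \<and>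
     (Comp \<in> \<sigma> \<longrightarrow> (\<forall>a\<in>carrier \<A>. \<forall>b\<in>carrier \<A>. \<theta> (comp \<A> a b) = pf_comp (\<theta> a) (\<theta> b))) \<and>
     (Meet \<in> \<sigma> \<longrightarrow> (\<forall>a\<in>carrier \<A>. \<forall>b\<in>carrier \<A>. \<theta> (meet \<A> a b) = pf_meet (\<theta> a) (\<theta> b))) \<and>
     (Upd \<in> \<sigma> \<longrightarrow> (\<forall>a\<in>carrier \<A>. \<forall>b\<in>carrier \<A>. \<theta> (upd \<A> a b) = pf_upd (\<theta> a) (\<theta> b))) \<and>
     (Pref \<in> \<sigma> \<longrightarrow> (\<forall>a\<in>carrier \<A>. \<forall>b\<in>carrier \<A>. \<theta> (pref \<A> a b) = pf_pref (\<theta> a) (\<theta> b))) \<and>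
     (Dom \<in> \<sigma> \<longrightarrow> (\<forall>a\<in>carrier \<A>. \<theta> (dom \<A> a) = pf_dom (\<theta> a))) \<and>
     (Antidom \<in> \<sigma> \<longrightarrow> (\<forall>a\<in>carrier \<A>. \<theta> (antidom \<A> a) = pf_antidom X (\<theta> a)))"

definition lhd :: "'a alg \<Rightarrow> 'a \<Rightarrow> 'a \<Rightarrow> 'a" where
  "lhd \<A> a b = restr \<A> (restr \<A> a b) b"

definition leq :: "'a alg \<Rightarrow> 'a \<Rightarrow> 'a \<Rightarrow> bool" where
  "leq \<A> a b \<longleftrightarrow> lhd \<A> a b = a"

definition is_join :: "'a alg \<Rightarrow> 'a set \<Rightarrow> 'a \<Rightarrow> bool" where
  "is_join \<A> S b \<longleftrightarrow> b \<in> carrier \<A> \<and> (\<forall>s\<in>S. leq \<A> s b) \<and>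
     (\<forall>c\<in>carrier \<A>. (\<forall>s\<in>S. leq \<A> s c) \<longrightarrow> leq \<A> b c)"

definition is_meet :: "'a alg \<Rightarrow> 'a set \<Rightarrow> 'a \<Rightarrow> bool" where
  "is_meet \<A> S b \<longleftrightarrow> b \<in> carrier \<A> \<and> (\<forall>s\<in>S. leq \<A> b s) \<and>
     (\<forall>c\<in>carrier \<A>. (\<forall>s\<in>S. leq \<A> c s) \<longrightarrow> leq \<A> c b)"

definition join_complete ::
  "'a alg \<Rightarrow> ('a \<Rightarrow> ('x \<times> 'x) set) \<Rightarrow> bool" where
  "join_complete \<A> \<theta> \<longleftrightarrow>
     (\<forall>S b. S \<subseteq> carrier \<A> \<and> is_join \<A> S b \<longrightarrow> \<theta> b = \<Union> (\<theta> ` S))"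

definition meet_complete ::
  "'a alg \<Rightarrow> ('a \<Rightarrow> ('x \<times> 'x) set) \<Rightarrow> bool" where
  "meet_complete \<A> \<theta> \<longleftrightarrow>
     (\<forall>S b. S \<subseteq> carrier \<A> \<and> S \<noteq> {} \<and> is_meet \<A> S b \<longrightarrow> \<theta> b = \<Inter> (\<theta> ` S))"

end

theory Submission
  imports Defs
begin

text \<open>A representation turns the derived order into inclusion, so joins and meets in the
algebra are detected by unions and intersections of the representing partial functions.
Relational composition with a fixed relation distributes over arbitrary unions, and
composition with a fixed partial function distributes over nonempty intersections,
because the intermediate point of a composite pair is unique. Completeness of the
representation makes the representing set of a join (meet) the union (intersection),
and the two distributivity laws transfer back to the algebra.\<close>

lemma single_valued_relcomp_INT_distrib:
  assumes "single_valued f" and "I \<noteq> {}"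
  shows "f O \<Inter> (g ` I) = (\<Inter>i\<in>I. f O g i)"
proof
  show "(\<Inter>i\<in>I. f O g i) \<subseteq> f O \<Inter> (g ` I)"
  proof (rule subrelI)
    fix x z assume "(x, z) \<in> (\<Inter>i\<in>I. f O g i)"
    then have xz: "\<forall>i\<in>I. (x, z) \<in> f O g i" by blast
    obtain i0 where "i0 \<in> I" using \<open>I \<noteq> {}\<close> by blast
    then obtain y where y: "(x, y) \<in> f" "(y, z) \<in> g i0" using xz by blast
    have "(y, z) \<in> g i" if "i \<in> I" for i
    proof -
      obtain y' where "(x, y') \<in> f" "(y', z) \<in> g i" using xz \<open>i \<in> I\<close> by blast
      with y \<open>single_valued f\<close> show ?thesis by (metis single_valuedD)
    qed
    with y show "(x, z) \<in> f O \<Inter> (g ` I)" by blast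
  qed
qed blast

locale pfun_representation =
  fixes \<sigma> :: "opsym set" and \<A> :: "'a alg" and X :: "'x set" and \<theta> :: "'a \<Rightarrow> ('x \<times> 'x) set"
  assumes representation: "representation \<sigma> \<A> X \<theta>"
    and restr_in_sig: "Restr \<in> \<sigma>"
    and sigma_alg: "sigma_algebra \<sigma> \<A>"
begin

lemma single_valued_rep: "a \<in> carrier \<A> \<Longrightarrow> single_valued (\<theta> a)"
  using representation unfolding representation_def pfun_on_def by blast

lemma leq_iff_subset:
  assumes a: "a \<in> carrier \<A>" and b: "b \<in> carrier \<A>"
  shows "leq \<A> a b \<longleftrightarrow> \<theta> a \<subseteq> \<theta> b"
proof -
  have lhd_closed: "lhd \<A> a b \<in> carrier \<A>"
    using sigma_alg restr_in_sig a b unfolding sigma_algebra_def lhd_def by auto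
  have "\<theta> (lhd \<A> a b) = pf_restr (pf_restr (\<theta> a) (\<theta> b)) (\<theta> b)"
    using representation restr_in_sig sigma_alg a b
    unfolding representation_def sigma_algebra_def lhd_def by auto
  also have "\<dots> = {(x, y) \<in> \<theta> b. x \<in> Domain (\<theta> a)}"
    unfolding pf_restr_def by auto
  finally have theta_lhd: "\<theta> (lhd \<A> a b) = {(x, y) \<in> \<theta> b. x \<in> Domain (\<theta> a)}" .
  have "leq \<A> a b \<longleftrightarrow> \<theta> (lhd \<A> a b) = \<theta> a"
    using representation lhd_closed a
    unfolding leq_def representation_def by (metis inj_on_eq_iff)
  also have "\<dots> \<longleftrightarrow> \<theta> a \<subseteq> \<theta> b"
    \<comment> \<open>the restriction of \<open>\<theta> b\<close> to \<open>Domain (\<theta> a)\<close> is \<open>\<theta> a\<close> exactly when \<open>\<theta> a \<subseteq> \<theta> b\<close>,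
        since \<open>\<theta> b\<close> is single valued\<close>
    using single_valued_rep[OF b] unfolding theta_lhd
    by (auto dest: single_valuedD)
  finally show ?thesis .
qed

lemma is_join_if_rep_Union:
  assumes "T \<subseteq> carrier \<A>" and "c \<in> carrier \<A>" and "\<theta> c = \<Union> (\<theta> ` T)"
  shows "is_join \<A> T c"
  using assms unfolding is_join_def
  by (auto simp: leq_iff_subset subset_iff)

lemma is_meet_if_rep_Inter:
  assumes "T \<subseteq> carrier \<A>" and "c \<in> carrier \<A>" and "\<theta> c = \<Inter> (\<theta> ` T)"
  shows "is_meet \<A> T c"
  using assms unfolding is_meet_def
  by (auto simp: leq_iff_subset subset_iff)

context
  assumes comp_in_sig: "Comp \<in> \<sigma>"
begin

lemma comp_closed: "a \<in> carrier \<A> \<Longrightarrow> b \<in> carrier \<A> \<Longrightarrow> comp \<A> a b \<in> carrier \<A>"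
  using sigma_alg comp_in_sig unfolding sigma_algebra_def by blast

lemma rep_comp: "a \<in> carrier \<A> \<Longrightarrow> b \<in> carrier \<A> \<Longrightarrow> \<theta> (comp \<A> a b) = \<theta> a O \<theta> b"
  using representation comp_in_sig unfolding representation_def pf_comp_def by blast

lemma comp_join_distrib:
  assumes "join_complete \<A> \<theta>" and S: "S \<subseteq> carrier \<A>" and "is_join \<A> S b"
    and a: "a \<in> carrier \<A>"
  shows "is_join \<A> ((\<lambda>s. comp \<A> a s) ` S) (comp \<A> a b)"
proof (rule is_join_if_rep_Union)
  have b: "b \<in> carrier \<A>" and "\<theta> b = \<Union> (\<theta> ` S)"
    using assms unfolding join_complete_def is_join_def by blast+
  then have "\<theta> (comp \<A> a b) = (\<Union>s\<in>S. \<theta> a O \<theta> s)"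
    using a by (simp add: rep_comp relcomp_UNION_distrib)
  then show "\<theta> (comp \<A> a b) = \<Union> (\<theta> ` (\<lambda>s. comp \<A> a s) ` S)"
    using a S by (auto simp: rep_comp subset_iff)
  show "comp \<A> a b \<in> carrier \<A>" using a b by (rule comp_closed)
qed (use a S comp_closed in blast)

lemma comp_meet_distrib:
  assumes "meet_complete \<A> \<theta>" and S: "S \<subseteq> carrier \<A>" and "S \<noteq> {}" and "is_meet \<A> S b"
    and a: "a \<in> carrier \<A>"
  shows "is_meet \<A> ((\<lambda>s. comp \<A> a s) ` S) (comp \<A> a b)"
proof (rule is_meet_if_rep_Inter)
  have b: "b \<in> carrier \<A>" and "\<theta> b = \<Inter> (\<theta> ` S)"
    using assms unfolding meet_complete_def is_meet_def by blast+
  then have "\<theta> (comp \<A> a b) = (\<Inter>s\<in>S. \<theta> a O \<theta> s)"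
    using a \<open>S \<noteq> {}\<close> by (simp add: rep_comp single_valued_relcomp_INT_distrib single_valued_rep)
  then show "\<theta> (comp \<A> a b) = \<Inter> (\<theta> ` (\<lambda>s. comp \<A> a s) ` S)"
    using a S by (auto simp: rep_comp subset_iff)
  show "comp \<A> a b \<in> carrier \<A>" using a b by (rule comp_closed)
qed (use a S comp_closed in blast)

end

end

theorem lemma5p5:
  fixes \<sigma> :: "opsym set" and \<A> :: "'a alg"
  assumes "Restr \<in> \<sigma>" and "Comp \<in> \<sigma>" and "sigma_algebra \<sigma> \<A>"
  shows "((\<exists>(X :: 'x set) \<theta>. representation \<sigma> \<A> X \<theta> \<and> join_complete \<A> \<theta>) \<longrightarrow>
           (\<forall>S b a. S \<subseteq> carrier \<A> \<and> is_join \<A> S b \<and> a \<in> carrier \<A> \<longrightarrow>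
              is_join \<A> ((\<lambda>s. comp \<A> a s) ` S) (comp \<A> a b)))
       \<and> ((\<exists>(X :: 'x set) \<theta>. representation \<sigma> \<A> X \<theta> \<and> meet_complete \<A> \<theta>) \<longrightarrow>
           (\<forall>S b a. S \<subseteq> carrier \<A> \<and> S \<noteq> {} \<and> is_meet \<A> S b \<and> a \<in> carrier \<A> \<longrightarrow>
              is_meet \<A> ((\<lambda>s. comp \<A> a s) ` S) (comp \<A> a b)))"
proof (intro conjI impI allI; elim exE conjE)
  fix X :: "'x set" and \<theta>
  assume "representation \<sigma> \<A> X \<theta>"
  then interpret pfun_representation \<sigma> \<A> X \<theta>
    using assms by unfold_locales
  fix S b a
  show "join_complete \<A> \<theta> \<Longrightarrow> S \<subseteq> carrier \<A> \<Longrightarrow> is_join \<A> S b \<Longrightarrow> a \<in> carrier \<A> \<Longrightarrow>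
      is_join \<A> ((\<lambda>s. comp \<A> a s) ` S) (comp \<A> a b)"
    and "meet_complete \<A> \<theta> \<Longrightarrow> S \<subseteq> carrier \<A> \<Longrightarrow> S \<noteq> {} \<Longrightarrow> is_meet \<A> S b \<Longrightarrow> a \<in> carrier \<A> \<Longrightarrow>
      is_meet \<A> ((\<lambda>s. comp \<A> a s) ` S) (comp \<A> a b)"
    using comp_join_distrib comp_meet_distrib assms(2) by blast+
qed

end
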